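(* Fix an initial exchange matrix $B^0$ and initial coefficients $p_1,\dots,p_n\in\mathbb P$ at $v_0$, and let $\mathcal S=\mathbb Q\mathbb P_{\mathrm{sf}}(y_1,\dots,y_n)$. For every $v\in\mathbb T^n$ and $j\in[1,n]$, writing $B_v=(b^v_{ij})$, $$\widetilde Y_{j;v}=\Big(\prod_{i=1}^n(F_{i;v}^{-b^v_{ij}})^{\mathbb P}(p_1,\dots,p_n)\Big)\Big(\prod_{i=1}^n(F_{i;v}^{b^v_{ij}})^{\mathcal S}(p_1y_1,\dots,p_ny_n)\Big)\,\mathbf y^{\mathbf c_{j;v}},$$ where $\mathbf y^{\mathbf c_{j;v}}=\prod_i y_i^{c_{ij;v}}$.
   Context: A semifield $(\mathbb P,\oplus,\cdot,1)$ satisfies the field axioms except that $\oplus$ need not have a neutral element or inverses. For $p\in\mathbb P$: $p^+=p/(p\oplus1)$, $p^-=1/(p\oplus1)$, and $p^{[\![x]\!]}=p^-,1,p^+$ according as $x<0,x=0,x>0$. $\mathbb Q_{\mathrm{sf}}(S)$ is the universal semifield of subtraction-free rational functions in the set $S$; for any semifield $\mathbb P'$ and $q_i\in\mathbb P'$ there is a unique semifield morphism sending the generators $s_i\mapsto q_i$, and the image of $f$ is written $f^{\mathbb P'}(q_1,\dots)$. $\mathbb Q\mathbb P$ is the fraction field of the group ring $\mathbb Z\mathbb P$, and $\mathbb Q\mathbb P_{\mathrm{sf}}(u_1,\dots,u_n)$ is the semifield of ratios of nonzero polynomials in the $u_i$ with coefficients nonnegative integer combinations of elements of $\mathbb P$.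 Tropical semifield $\mathrm{Trop}(z_i:i\in I)$: free abelian group on the $z_i$ with $\prod z_i^{a_i}\oplus\prod z_i^{b_i}=\prod z_i^{\min(a_i,b_i)}$. Matrix mutation: $b'_{ij}=-b_{ij}$ if $i=k$ or $j=k$, else $b_{ij}+\operatorname{sgn}(b_{ik})[b_{ik}b_{kj}]_+$. $Y$-seed mutation in a semifield: $y'_k=y_k^{-1}$, $y'_j=y_j(1\oplus y_k^{-\operatorname{sgn}(b_{kj})})^{-b_{kj}}$ ($j\ne k$). $Y$-seed with coefficients $(\mathbf y,\mathbf p,B)$ mutates by mutating $(\mathbf p,B)$ as a $Y$-seed in $\mathbb P$, $y'_k=y_k^{-1}$, $y'_j=y_j\big(p_k^{[\![b_{kj}]\!]}+p_k^{[\![-b_{kj}]\!]}y_k^{-\operatorname{sgn}(b_{kj})}\big)^{-b_{kj}}$ for $j\neq k$. Patterns are assignments of seeds to vertices of the $n$-regular edge-labeled tree $\mathbb T^n$ (initial vertex $v_0$) compatible with mutation along edges. $Y_{j;v}\in\mathbb Q_{\mathrm{sf}}(y_1,\dots,y_n)$: components of the $Y$-pattern with initial seed $((y_1,\dots,y_n),B^0)$; $B_v$ the exchange matrices. $\widetilde Y_{j;v}$: components of the $Y$-pattern with coefficients with initial seed $((y_1,\dots,y_n),(p_1,\dots,p_n),B^0)$. c-vectors: $\mathbf c_{j;v}=(c_{1j;v},\dots,c_{nj;v})\in\mathbb Z^n$ is defined by $Y_{j;v}^{\mathrm{Trop}(y_1,\dots,y_n)}(y_1,\dots,y_n)=\prod_i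 y_i^{c_{ij;v}}$. F-polynomials: a cluster pattern with coefficients in a semifield $\mathbb P$ assigns to each $v$ a triple $(\mathbf x_v,\mathbf p_v,B_v)$, with $(\mathbf p_v,B_v)$ a $Y$-pattern in $\mathbb P$ and clusters mutating by $x'_j=x_j$ ($j\ne k$), $x'_k=\big(p_k^-\prod_{b_{ik}<0}x_i^{-b_{ik}}+p_k^+\prod_{b_{ik}>0}x_i^{b_{ik}}\big)/x_k$. Take principal coefficients: $\mathbb P=\mathrm{Trop}(z_1,\dots,z_n)$, initial seed $((x_1,\dots,x_n),(z_1,\dots,z_n),B^0)$. Its cluster variables are Laurent polynomials $X^{\mathrm{FZ}}_{j;v}\in\mathbb Z[x_1^{\pm1},\dots,x_n^{\pm1};z_1,\dots,z_n]$, and $F_{j;v}(z_1,\dots,z_n):=X^{\mathrm{FZ}}_{j;v}(1,\dots,1;z_1,\dots,z_n)$; each $F_{j;v}$ is regarded as an element of $\mathbb Q_{\mathrm{sf}}(z_1,\dots,z_n)$, so that $(F^{\pm b}_{i;v})^{\mathbb P'}(q_1,\dots,q_n)$ denotes its image under $z_i\mapsto q_i$. *)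

theory Defs
  imports Main "HOL-Library.Poly_Mapping" "HOL-Library.Product_Plus"
begin

text \<open>No additive neutral element or additive inverses are required.\<close>

class semifield = comm_semiring + comm_monoid_mult + inverse +
  assumes semifield_right_inverse: "a * inverse a = 1"
  and semifield_divide: "a / b = a * inverse b"

text \<open>Semifield signatures passed explicitly (used for the free semifield of
subtraction-free expressions, tropical semifields, the ambient field of fractions).\<close>

record 'a sfops =
  sadd :: "'a \<Rightarrow> 'a \<Rightarrow> 'a"
  smul :: "'a \<Rightarrow> 'a \<Rightarrow> 'a"
  sinv :: "'a \<Rightarrow> 'a"
  sone :: 'a

definition spow :: "'a sfops \<Rightarrow> 'a \<Rightarrow> int \<Rightarrow> 'a" where
  "spow ops a m = (if 0 \<le> m then (smul ops a ^^ nat m) (sone ops)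
                 else sinv ops ((smul ops a ^^ nat (- m)) (sone ops)))"

text \<open>Product over indices 0..n-1 (the paper's 1..n).\<close>
definition sprod :: "'a sfops \<Rightarrow> nat \<Rightarrow> (nat \<Rightarrow> 'a) \<Rightarrow> 'a" where
  "sprod ops n f = foldr (\<lambda>i acc. smul ops (f i) acc) [0..<n] (sone ops)"

definition P_ops :: "'p::semifield sfops" where
  "P_ops = \<lparr>sadd = (+), smul = (*), sinv = inverse, sone = 1\<rparr>"

definition cplus :: "'a sfops \<Rightarrow> 'a \<Rightarrow> 'a" where
  "cplus ops p = smul ops p (sinv ops (sadd ops p (sone ops)))"
definition cminus :: "'a sfops \<Rightarrow> 'a \<Rightarrow> 'a" where
  "cminus ops p = sinv ops (sadd ops p (sone ops))"
definition cbr :: "'a sfops \<Rightarrow> 'a \<Rightarrow> int \<Rightarrow> 'a" where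
  "cbr ops p x = (if x < 0 then cminus ops p else if x = 0 then sone ops else cplus ops p)"

section \<open>Universal semifield Q_sf(S): subtraction-free expressions\<close>

datatype 'v sfe = V 'v | One | Add "'v sfe" "'v sfe" | Mul "'v sfe" "'v sfe" | Inv "'v sfe"

definition E_ops :: "'v sfe sfops" where
  "E_ops = \<lparr>sadd = Add, smul = Mul, sinv = Inv, sone = One\<rparr>"

primrec seval :: "'a sfops \<Rightarrow> ('v \<Rightarrow> 'a) \<Rightarrow> 'v sfe \<Rightarrow> 'a" where
  "seval ops \<rho> (V v) = \<rho> v"
| "seval ops \<rho> One = sone ops"
| "seval ops \<rho> (Add a b) = sadd ops (seval ops \<rho> a) (seval ops \<rho> b)"
| "seval ops \<rho> (Mul a b) = smul ops (seval ops \<rho> a) (seval ops \<rho> b)"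
| "seval ops \<rho> (Inv a) = sinv ops (seval ops \<rho> a)"

section \<open>Tropical semifield Trop(z_0,...) : exponent vectors, min as addition\<close>

definition Trop_ops :: "(nat \<Rightarrow> int) sfops" where
  "Trop_ops = \<lparr>sadd = (\<lambda>a b i. min (a i) (b i)), smul = (\<lambda>a b i. a i + b i),
               sinv = (\<lambda>a i. - a i), sone = (\<lambda>i. 0)\<rparr>"

definition trop_gen :: "nat \<Rightarrow> nat \<Rightarrow> int" where
  "trop_gen i = (\<lambda>l. if l = i then 1 else 0)"

definition mutB :: "nat \<Rightarrow> (nat \<Rightarrow> nat \<Rightarrow> int) \<Rightarrow> (nat \<Rightarrow> nat \<Rightarrow> int)" where
  "mutB k B = (\<lambda>i j. if i = k \<or> j = k then - B i j
                      else B i j + sgn (B i k) * max 0 (B i k * B k j))"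

definition ymut :: "'a sfops \<Rightarrow> nat \<Rightarrow> (nat \<Rightarrow> nat \<Rightarrow> int) \<Rightarrow> (nat \<Rightarrow> 'a) \<Rightarrow> (nat \<Rightarrow> 'a)" where
  "ymut ops k B y = (\<lambda>j. if j = k then sinv ops (y k)
      else smul ops (y j) (spow ops (sadd ops (sone ops) (spow ops (y k) (- sgn (B k j)))) (- B k j)))"

text \<open>Y-pattern: value at the vertex reached from v0 by the edge labels ks (in order).\<close>
definition ypat :: "'a sfops \<Rightarrow> (nat \<Rightarrow> nat \<Rightarrow> int) \<Rightarrow> (nat \<Rightarrow> 'a) \<Rightarrow> nat list
                    \<Rightarrow> (nat \<Rightarrow> 'a) \<times> (nat \<Rightarrow> nat \<Rightarrow> int)" where
  "ypat ops B0 y0 ks = foldl (\<lambda>(y, B) k. (ymut ops k B y, mutB k B)) (y0, B0) ks"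

definition Bv :: "(nat \<Rightarrow> nat \<Rightarrow> int) \<Rightarrow> nat list \<Rightarrow> (nat \<Rightarrow> nat \<Rightarrow> int)" where
  "Bv B0 ks = foldl (\<lambda>B k. mutB k B) B0 ks"

definition exchange_matrix :: "nat \<Rightarrow> (nat \<Rightarrow> nat \<Rightarrow> int) \<Rightarrow> bool" where
  "exchange_matrix n B \<longleftrightarrow> (\<exists>d :: nat \<Rightarrow> int. (\<forall>i<n. 0 < d i) \<and>
       (\<forall>i<n. \<forall>j<n. d i * B i j = - (d j * B j i)))"

text \<open>Vertices of the n-regular tree T^n = reduced words of edge labels read from v0.\<close>
definition tree_vertex :: "nat \<Rightarrow> nat list \<Rightarrow> bool" where
  "tree_vertex n ks \<longleftrightarrow> (\<forall>k\<in>set ks. k < n) \<and> (\<forall>i. Suc i < length ks \<longrightarrow> ks ! i \<noteq> ks ! Suc i)"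

definition Yuniv :: "(nat \<Rightarrow> nat \<Rightarrow> int) \<Rightarrow> nat list \<Rightarrow> nat \<Rightarrow> nat sfe" where
  "Yuniv B0 ks j = fst (ypat E_ops B0 V ks) j"

definition cvec :: "(nat \<Rightarrow> nat \<Rightarrow> int) \<Rightarrow> nat list \<Rightarrow> nat \<Rightarrow> nat \<Rightarrow> int" where
  "cvec B0 ks j i = seval Trop_ops trop_gen (Yuniv B0 ks j) i"

text \<open>Cluster variables as subtraction-free expressions; Inl i is x_i, Inr i is z_i.
A coefficient a in Trop(z) is the monomial prod z_i^(a_i).\<close>

definition zmono :: "nat \<Rightarrow> (nat \<Rightarrow> int) \<Rightarrow> (nat + nat) sfe" where
  "zmono n a = sprod E_ops n (\<lambda>i. spow E_ops (V (Inr i)) (a i))"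

definition xmut :: "nat \<Rightarrow> nat \<Rightarrow> (nat \<Rightarrow> nat \<Rightarrow> int) \<Rightarrow> (nat \<Rightarrow> nat \<Rightarrow> int)
                    \<Rightarrow> (nat \<Rightarrow> (nat + nat) sfe) \<Rightarrow> (nat \<Rightarrow> (nat + nat) sfe)" where
  "xmut n k B p x = (\<lambda>j. if j \<noteq> k then x j else
     Mul (Add (Mul (zmono n (cminus Trop_ops (p k)))
                   (sprod E_ops n (\<lambda>i. if B i k < 0 then spow E_ops (x i) (- B i k) else One)))
              (Mul (zmono n (cplus Trop_ops (p k)))
                   (sprod E_ops n (\<lambda>i. if B i k > 0 then spow E_ops (x i) (B i k) else One))))
         (Inv (x k)))"

definition cpat_principal :: "nat \<Rightarrow> (nat \<Rightarrow> nat \<Rightarrow> int) \<Rightarrow> nat list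
    \<Rightarrow> (nat \<Rightarrow> (nat + nat) sfe) \<times> (nat \<Rightarrow> nat \<Rightarrow> int) \<times> (nat \<Rightarrow> nat \<Rightarrow> int)" where
  "cpat_principal n B0 ks = foldl (\<lambda>(x, p, B) k. (xmut n k B p x, ymut Trop_ops k B p, mutB k B))
      (\<lambda>i. V (Inl i), trop_gen, B0) ks"

definition Fpoly :: "nat \<Rightarrow> (nat \<Rightarrow> nat \<Rightarrow> int) \<Rightarrow> nat list \<Rightarrow> nat \<Rightarrow> nat sfe" where
  "Fpoly n B0 ks j = seval E_ops (\<lambda>v. case v of Inl _ \<Rightarrow> One | Inr i \<Rightarrow> V i)
                        (fst (cpat_principal n B0 ks) j)"

text \<open>The multiplicative group of P, written additively, so that ZP[y_0,y_1,...]
is the monoid ring Z[P x N^(N)] (poly_mapping with convolution).\<close>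

datatype 'p mult = Mult 'p

instantiation mult :: (comm_monoid_mult) comm_monoid_add
begin
fun plus_mult :: "'a mult \<Rightarrow> 'a mult \<Rightarrow> 'a mult" where
  "plus_mult (Mult a) (Mult b) = Mult (a * b)"
definition zero_mult :: "'a mult" where "zero_mult = Mult 1"
instance
proof
  fix a b c :: "'a mult"
  show "a + b + c = a + (b + c)" by (cases a; cases b; cases c) (simp add: mult.assoc)
  show "a + b = b + a" by (cases a; cases b) (simp add: mult.commute)
  show "0 + a = a" by (cases a) (simp add: zero_mult_def)
qed
end

type_synonym 'p ZPy = "('p mult \<times> (nat \<Rightarrow>\<^sub>0 nat)) \<Rightarrow>\<^sub>0 int"

text \<open>Elements of QP(y) are represented as fractions (numerator, denominator);
equality in the fraction field is cross-multiplication.\<close>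
type_synonym 'p QPy = "'p ZPy \<times> 'p ZPy"

definition S_ops :: "'p::comm_monoid_mult QPy sfops" where
  "S_ops = \<lparr>sadd = (\<lambda>(a, b) (c, d). (a * d + c * b, b * d)),
            smul = (\<lambda>(a, b) (c, d). (a * c, b * d)),
            sinv = (\<lambda>(a, b). (b, a)), sone = (1, 1)\<rparr>"

definition qeq :: "'p::comm_monoid_mult QPy \<Rightarrow> 'p QPy \<Rightarrow> bool" where
  "qeq u w \<longleftrightarrow> fst u * snd w = fst w * snd u"

definition embP :: "'p::comm_monoid_mult \<Rightarrow> 'p QPy" where
  "embP p = (Poly_Mapping.single (Mult p, 0) 1, 1)"

definition yvar :: "nat \<Rightarrow> 'p::comm_monoid_mult QPy" where
  "yvar i = (Poly_Mapping.single (Mult 1, Poly_Mapping.single i 1) 1, 1)"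

definition ycmut :: "nat \<Rightarrow> (nat \<Rightarrow> nat \<Rightarrow> int) \<Rightarrow> (nat \<Rightarrow> 'p::semifield)
                     \<Rightarrow> (nat \<Rightarrow> 'p QPy) \<Rightarrow> (nat \<Rightarrow> 'p QPy)" where
  "ycmut k B p y = (\<lambda>j. if j = k then sinv S_ops (y k)
      else smul S_ops (y j)
        (spow S_ops (sadd S_ops (embP (cbr P_ops (p k) (B k j)))
                                (smul S_ops (embP (cbr P_ops (p k) (- B k j)))
                                            (spow S_ops (y k) (- sgn (B k j)))))
              (- B k j)))"

definition ycpat :: "(nat \<Rightarrow> nat \<Rightarrow> int) \<Rightarrow> (nat \<Rightarrow> 'p::semifield) \<Rightarrow> nat list
    \<Rightarrow> (nat \<Rightarrow> 'p QPy) \<times> (nat \<Rightarrow> 'p) \<times> (nat \<Rightarrow> nat \<Rightarrow> int)" where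
  "ycpat B0 p0 ks = foldl (\<lambda>(y, p, B) k. (ycmut k B p y, ymut P_ops k B p, mutB k B))
      (yvar, p0, B0) ks"

definition Ytilde :: "(nat \<Rightarrow> nat \<Rightarrow> int) \<Rightarrow> (nat \<Rightarrow> 'p::semifield) \<Rightarrow> nat list \<Rightarrow> nat \<Rightarrow> 'p QPy" where
  "Ytilde B0 p0 ks j = fst (ycpat B0 p0 ks) j"

end

theory Submission
  imports Defs "HOL-Library.Product_Lexorder"
begin

(* Positive fractions of ZP[y] form a semifield, and in it the Y-pattern with coefficients is a
   ratio of two coefficient-free Y-patterns,
     Ytilde_{j;v} = Y_{j;v}(p_1 y_1, ..., p_n y_n) / Y_{j;v}(p_1, ..., p_n),
   as one checks mutation by mutation. In every semifield the separation formula
     Y_{j;v}(y) = y^{c_{j;v}} * prod_i F_{i;v}(y)^{b_{ij}}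
   holds, again by induction along the path, using the recursion of the F-polynomials and b_kk = 0
   (skew-symmetrizability survives mutation). Dividing the two instances of the separation formula
   gives the theorem. Cross-multiplication is transitive on positive fractions because ZP[y] is a
   domain: the multiplicative group of a semifield is torsion-free, hence linearly orderable by
   Zorn's lemma. *)

context semifield
begin

lemma sf_left_inverse: "inverse a * a = 1"
  using semifield_right_inverse[of a] by (simp add: mult.commute)

lemma sf_mult_left_cancel: "a * b = a * c \<Longrightarrow> b = c"
  by (metis mult.assoc mult_1 sf_left_inverse)

lemma sf_inverse_unique: "a * b = 1 \<Longrightarrow> inverse a = b"
  by (rule sf_mult_left_cancel[of a]) (simp add: semifield_right_inverse)

lemma sf_inverse_inverse [simp]: "inverse (inverse a) = a"
  by (rule sf_inverse_unique) (simp add: sf_left_inverse)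

lemma sf_inverse_mult: "inverse (a * b) = inverse a * inverse b"
  by (rule sf_inverse_unique) (metis mult.assoc mult.left_commute mult_1 semifield_right_inverse)

lemma sf_inverse_one [simp]: "inverse 1 = 1"
  by (rule sf_inverse_unique) simp

lemma sf_inverse_power: "inverse (a ^ k) = inverse a ^ k"
  by (induction k) (simp_all add: sf_inverse_mult)

lemma sf_inverse_prod: "inverse (\<Prod>i\<in>A. f i) = (\<Prod>i\<in>A. inverse (f i))"
  by (induction A rule: infinite_finite_induct) (simp_all add: sf_inverse_mult)

end

definition ipow :: "'a::semifield \<Rightarrow> int \<Rightarrow> 'a" where
  "ipow a m = (if 0 \<le> m then a ^ nat m else inverse (a ^ nat (- m)))"

lemma ipow_0 [simp]: "ipow a 0 = 1"
  and ipow_1 [simp]: "ipow a 1 = a"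
  and ipow_one [simp]: "ipow (1::'a::semifield) m = 1"
  and ipow_of_nat: "ipow a (int k) = a ^ k"
  by (simp_all add: ipow_def)

lemma ipow_diff_of_nat: "ipow (a::'a::semifield) (int k - int l) = a ^ k * inverse (a ^ l)"
proof (cases "l \<le> k")
  case True
  then obtain d where "k = l + d" using le_Suc_ex by blast
  then show ?thesis
    by (simp add: ipow_def power_add mult.assoc mult.commute[of "a ^ l"] semifield_right_inverse)
next
  case False
  then obtain d where "l = k + d" "d > 0" by (metis less_imp_add_positive not_le)
  then show ?thesis
    by (simp add: ipow_def power_add sf_inverse_mult mult.assoc[symmetric] semifield_right_inverse)
qed

lemma int_diff_of_nat_cases: obtains k l where "(m::int) = int k - int l"
  using that[of "nat m" "nat (- m)"] by linarith

lemma ipow_add: "ipow (a::'a::semifield) (m + m') = ipow a m * ipow a m'"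
proof -
  obtain k l k' l' where m: "m = int k - int l" and m': "m' = int k' - int l'"
    by (meson int_diff_of_nat_cases)
  then have "m + m' = int (k + k') - int (l + l')" by simp
  then show ?thesis
    by (simp only: m m' ipow_diff_of_nat) (simp add: power_add sf_inverse_mult ac_simps)
qed

lemma ipow_uminus: "ipow (a::'a::semifield) (- m) = inverse (ipow a m)"
proof -
  obtain k l where m: "m = int k - int l" by (rule int_diff_of_nat_cases)
  then have "- m = int l - int k" by simp
  then show ?thesis
    by (simp only: m ipow_diff_of_nat) (simp add: sf_inverse_mult mult.commute)
qed

lemma ipow_mult_distrib: "ipow ((a::'a::semifield) * b) m = ipow a m * ipow b m"
  by (simp add: ipow_def power_mult_distrib sf_inverse_mult)

lemma ipow_inverse: "ipow (inverse (a::'a::semifield)) m = inverse (ipow a m)"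
  by (simp add: ipow_def sf_inverse_power)

lemma ipow_ipow: "ipow (ipow (a::'a::semifield) m) m' = ipow a (m * m')"
proof -
  have power: "ipow (ipow a m) (int k) = ipow a (m * int k)" for k
    by (induction k) (simp_all add: ipow_of_nat ipow_add algebra_simps)
  obtain k l where m': "m' = int k - int l" by (rule int_diff_of_nat_cases)
  have "ipow (ipow a m) m' = ipow a (m * int k) * inverse (ipow a (m * int l))"
    by (simp only: m' ipow_diff_of_nat power[symmetric] ipow_of_nat)
  also have "\<dots> = ipow a (m * int k + - (m * int l))"
    by (simp only: ipow_add ipow_uminus)
  finally show ?thesis by (simp add: m' right_diff_distrib)
qed

lemma ipow_prod: "ipow (\<Prod>i\<in>A. (f i::'a::semifield)) m = (\<Prod>i\<in>A. ipow (f i) m)"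
  by (induction A rule: infinite_finite_induct) (simp_all add: ipow_mult_distrib)

lemma spow_P_ops [simp]: "spow P_ops a m = ipow a m"
proof -
  have "(((*) a) ^^ k) 1 = a ^ k" for k by (induction k) simp_all
  then show ?thesis by (simp add: spow_def P_ops_def ipow_def)
qed

lemma sprod_P_ops [simp]: "sprod P_ops n f = (\<Prod>i<n. (f i::'a::semifield))"
proof -
  have "foldr (\<lambda>i acc. f i * acc) is z = prod_list (map f is) * z" for "is" z
    by (induction "is") (simp_all add: mult.assoc)
  then show ?thesis
    by (simp add: sprod_def P_ops_def prod.distinct_set_conv_list[symmetric] atLeast0LessThan)
qed

definition laurent_monomial :: "nat \<Rightarrow> (nat \<Rightarrow> 'a::semifield) \<Rightarrow> (nat \<Rightarrow> int) \<Rightarrow> 'a" where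
  "laurent_monomial n y e = (\<Prod>i<n. ipow (y i) (e i))"

lemma laurent_monomial_add:
  "laurent_monomial n y (\<lambda>i. e i + e' i) = laurent_monomial n y e * laurent_monomial n y e'"
  by (simp add: laurent_monomial_def ipow_add prod.distrib)

lemma laurent_monomial_uminus:
  "laurent_monomial n y (\<lambda>i. - e i) = inverse (laurent_monomial n y e)"
  by (simp add: laurent_monomial_def ipow_uminus sf_inverse_prod)

lemma laurent_monomial_ipow:
  "ipow (laurent_monomial n y e) m = laurent_monomial n y (\<lambda>i. m * e i)"
  by (simp add: laurent_monomial_def ipow_prod ipow_ipow mult.commute)

lemma laurent_monomial_cong:
  "(\<And>i. i < n \<Longrightarrow> e i = e' i) \<Longrightarrow> laurent_monomial n y e = laurent_monomial n y e'"
  unfolding laurent_monomial_def by (rule prod.cong) auto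

lemma laurent_monomial_update:
  assumes "k < n"
  shows "laurent_monomial n (y(k := w)) e = ipow w (e k) * laurent_monomial n y (e(k := 0))"
proof -
  have remove: "laurent_monomial n y' e'
      = ipow (y' k) (e' k) * (\<Prod>i\<in>{..<n} - {k}. ipow (y' i) (e' i))" for y' e'
    using assms unfolding laurent_monomial_def by (simp add: prod.remove)
  have "(\<Prod>i\<in>{..<n} - {k}. ipow ((y(k := w)) i) (e i))
      = (\<Prod>i\<in>{..<n} - {k}. ipow (y i) ((e(k := 0)) i))"
    by (rule prod.cong) auto
  then show ?thesis using remove[of "y(k := w)" e] remove[of y "e(k := 0)"] by simp
qed

lemma laurent_monomial_zero [simp]: "laurent_monomial n y (\<lambda>_. 0) = 1"
  by (simp add: laurent_monomial_def)

lemma laurent_monomial_single: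
  "k < n \<Longrightarrow> laurent_monomial n y ((\<lambda>_. 0)(k := m)) = ipow (y k) m"
  using laurent_monomial_update[of k n y "y k" "(\<lambda>_. 0)(k := m)"]
  by (simp add: fun_upd_idem)

lemma P_ops_simps [simp]:
  "sadd P_ops = (+)" "smul P_ops = (*)" "sinv P_ops = inverse" "sone P_ops = 1"
  by (simp_all add: P_ops_def)

lemma seval_seval: "seval ops \<rho> (seval E_ops \<sigma> e) = seval ops (\<lambda>v. seval ops \<rho> (\<sigma> v)) e"
  by (induction e) (simp_all add: E_ops_def)

lemma seval_spow: "seval ops \<rho> (spow E_ops e m) = spow ops (seval ops \<rho> e) m"
proof -
  have "seval ops \<rho> ((Mul e ^^ k) One) = (smul ops (seval ops \<rho> e) ^^ k) (sone ops)" for k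
    by (induction k) simp_all
  then show ?thesis by (simp add: spow_def E_ops_def)
qed

lemma seval_sprod: "seval ops \<rho> (sprod E_ops n f) = sprod ops n (\<lambda>i. seval ops \<rho> (f i))"
proof -
  have "seval ops \<rho> (foldr (\<lambda>i. Mul (f i)) is One)
      = foldr (\<lambda>i. smul ops (seval ops \<rho> (f i))) is (sone ops)" for "is"
    by (induction "is") simp_all
  then show ?thesis by (simp add: sprod_def E_ops_def)
qed

lemma seval_ymut: "seval ops \<rho> (ymut E_ops k B y j) = ymut ops k B (\<lambda>j. seval ops \<rho> (y j)) j"
  using seval_spow[of ops \<rho>] by (simp add: ymut_def E_ops_def)

lemma Bv_Nil [simp]: "Bv B0 [] = B0"
  and Bv_snoc: "Bv B0 (ks @ [k]) = mutB k (Bv B0 ks)"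
  by (simp_all add: Bv_def)

lemma ypat_Nil [simp]: "ypat ops B0 y0 [] = (y0, B0)"
  by (simp add: ypat_def)

lemma snd_ypat: "snd (ypat ops B0 y0 ks) = Bv B0 ks"
  by (induction ks rule: rev_induct) (simp_all add: ypat_def Bv_def split_beta)

lemma fst_ypat_snoc:
  "fst (ypat ops B0 y0 (ks @ [k])) = ymut ops k (Bv B0 ks) (fst (ypat ops B0 y0 ks))"
  using snd_ypat[of ops B0 y0 ks] by (simp add: ypat_def split_beta)

lemma seval_ypat:
  "seval ops \<rho> (fst (ypat E_ops B0 y0 ks) j) = fst (ypat ops B0 (\<lambda>j. seval ops \<rho> (y0 j)) ks) j"
  by (induction ks arbitrary: j rule: rev_induct) (simp_all add: fst_ypat_snoc seval_ymut)

lemma cvec_eq_ypat: "cvec B0 ks = fst (ypat Trop_ops B0 trop_gen ks)"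
  by (intro ext) (simp add: cvec_def Yuniv_def seval_ypat)

lemma cvec_Nil: "cvec B0 [] j = trop_gen j"
  and cvec_snoc: "cvec B0 (ks @ [k]) j = ymut Trop_ops k (Bv B0 ks) (cvec B0 ks) j"
  by (simp_all add: cvec_eq_ypat fst_ypat_snoc)

lemma fst_cpat_principal_snoc:
  "fst (cpat_principal n B0 (ks @ [k])) =
     xmut n k (Bv B0 ks) (cvec B0 ks) (fst (cpat_principal n B0 ks))"
proof -
  have "snd (cpat_principal n B0 ks) = (fst (ypat Trop_ops B0 trop_gen ks), Bv B0 ks)"
    by (induction ks rule: rev_induct)
      (simp_all add: cpat_principal_def split_beta fst_ypat_snoc Bv_snoc)
  then show ?thesis by (simp add: cpat_principal_def split_beta cvec_eq_ypat)
qed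

lemma ymut_Trop_ops:
  "ymut Trop_ops k B c j i =
     (if j = k then - c k i else c j i + B k j * max 0 (sgn (B k j) * c k i))"
proof -
  have "(smul Trop_ops a ^^ m) (sone Trop_ops) = (\<lambda>i. int m * a i)" for a m
    by (induction m) (auto simp: Trop_ops_def algebra_simps)
  then have "spow Trop_ops a m = (\<lambda>i. m * a i)" for a m
    by (auto simp: spow_def Trop_ops_def)
  then show ?thesis
    by (simp add: ymut_def) (simp add: Trop_ops_def min_def max_def)
qed

lemma ymut_P_ops:
  "ymut P_ops k B y j =
     (if j = k then inverse (y k) else y j * ipow (1 + ipow (y k) (- sgn (B k j))) (- B k j))"
  by (simp add: ymut_def)

section \<open>Skew-symmetrizable matrices under mutation\<close>

definition skew_symmetrizer :: "nat \<Rightarrow> (nat \<Rightarrow> int) \<Rightarrow> (nat \<Rightarrow> nat \<Rightarrow> int) \<Rightarrow> bool" where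
  "skew_symmetrizer n d B \<longleftrightarrow>
     (\<forall>i<n. 0 < d i) \<and> (\<forall>i<n. \<forall>j<n. d i * B i j = - (d j * B j i))"

lemma skew_symmetrizer_diag: "skew_symmetrizer n d B \<Longrightarrow> i < n \<Longrightarrow> B i i = 0"
proof -
  assume "skew_symmetrizer n d B" "i < n"
  then have "d i * B i i = - (d i * B i i)" "0 < d i" unfolding skew_symmetrizer_def by blast+
  then show ?thesis by simp
qed

lemma sgn_mult_max_eq: "2 * (sgn a * max 0 (a * b)) = a * \<bar>b\<bar> + \<bar>a\<bar> * (b::int)"
  by (cases a "0::int" rule: linorder_cases; cases b "0::int" rule: linorder_cases)
    (simp_all add: mult_pos_pos mult_neg_neg mult_pos_neg mult_neg_pos)

lemma skew_symmetrizer_mutB: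
  assumes d: "skew_symmetrizer n d B" and k: "k < n"
  shows "skew_symmetrizer n d (mutB k B)"
  unfolding skew_symmetrizer_def
proof (intro conjI allI impI)
  fix i j assume ij: "i < n" "j < n"
  have skew: "d i' * B i' j' = - (d j' * B j' i')" if "i' < n" "j' < n" for i' j'
    using d that unfolding skew_symmetrizer_def by blast
  have pos: "0 < d i'" if "i' < n" for i' using d that unfolding skew_symmetrizer_def by blast
  have abs_k: "d i' * \<bar>B i' k\<bar> = d k * \<bar>B k i'\<bar>" if "i' < n" for i'
    using arg_cong[OF skew[OF that k], of abs] pos[OF that] pos[OF k] by (simp add: abs_mult)
  \<comment> \<open>by \<open>sgn_mult_max_eq\<close> the correction term is bilinear, so skew-symmetry holds termwise\<close>
  have "d i * (B i k * \<bar>B k j\<bar>) = (d i * B i k) * \<bar>B k j\<bar>" by simp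
  also have "\<dots> = - ((d j * \<bar>B j k\<bar>) * B k i)"
    unfolding skew[OF ij(1) k] abs_k[OF ij(2)] by simp
  finally have 1: "d i * (B i k * \<bar>B k j\<bar>) = - (d j * (\<bar>B j k\<bar> * B k i))" by simp
  have "d i * (\<bar>B i k\<bar> * B k j) = (d i * \<bar>B i k\<bar>) * B k j" by simp
  also have "\<dots> = - ((d j * B j k) * \<bar>B k i\<bar>)"
    unfolding skew[OF ij(2) k] abs_k[OF ij(1)] by simp
  finally have 2: "d i * (\<bar>B i k\<bar> * B k j) = - (d j * (B j k * \<bar>B k i\<bar>))" by simp
  have "d i * (2 * (sgn (B i k) * max 0 (B i k * B k j)))
      = - (d j * (2 * (sgn (B j k) * max 0 (B j k * B k i))))"
    unfolding sgn_mult_max_eq using 1 2 by (simp add: distrib_left)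
  then show "d i * mutB k B i j = - (d j * mutB k B j i)"
    using skew[OF ij] by (auto simp: mutB_def algebra_simps)
qed (use d in \<open>simp add: skew_symmetrizer_def\<close>)

lemma skew_symmetrizer_Bv:
  "skew_symmetrizer n d B0 \<Longrightarrow> \<forall>k\<in>set ks. k < n \<Longrightarrow> skew_symmetrizer n d (Bv B0 ks)"
  by (induction ks rule: rev_induct) (auto simp: Bv_snoc intro: skew_symmetrizer_mutB)

section \<open>The separation formula\<close>

definition Fpoly_eval ::
    "nat \<Rightarrow> (nat \<Rightarrow> nat \<Rightarrow> int) \<Rightarrow> nat list \<Rightarrow> (nat \<Rightarrow> 'a::semifield) \<Rightarrow> nat \<Rightarrow> 'a" where
  "Fpoly_eval n B0 ks y i = seval P_ops y (Fpoly n B0 ks i)"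

definition exchange_monomial ::
    "nat \<Rightarrow> (nat \<Rightarrow> 'a::semifield) \<Rightarrow> (nat \<Rightarrow> 'a) \<Rightarrow> (nat \<Rightarrow> int) \<Rightarrow> (nat \<Rightarrow> int) \<Rightarrow> int \<Rightarrow> 'a" where
  "exchange_monomial n y F c b s =
     laurent_monomial n y (\<lambda>i. max 0 (s * c i)) * laurent_monomial n F (\<lambda>i. max 0 (s * b i))"

lemma Fpoly_eval_cpat_principal:
  "Fpoly_eval n B0 ks y i = seval P_ops (case_sum (\<lambda>_. 1) y) (fst (cpat_principal n B0 ks) i)"
proof -
  have "(\<lambda>v::nat + nat. seval P_ops y (case v of Inl _ \<Rightarrow> One | Inr i \<Rightarrow> V i))
      = case_sum (\<lambda>_. 1) y"
    by (rule ext) (simp split: sum.split)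
  then show ?thesis by (simp add: Fpoly_eval_def Fpoly_def seval_seval)
qed

lemma Fpoly_eval_Nil: "Fpoly_eval n B0 [] y = (\<lambda>_. 1)"
  by (rule ext) (simp add: Fpoly_eval_cpat_principal cpat_principal_def)

lemma Fpoly_eval_snoc:
  "Fpoly_eval n B0 (ks @ [k]) y = (Fpoly_eval n B0 ks y)(k :=
     (exchange_monomial n y (Fpoly_eval n B0 ks y) (cvec B0 ks k) (\<lambda>i. Bv B0 ks i k) (- 1) +
      exchange_monomial n y (Fpoly_eval n B0 ks y) (cvec B0 ks k) (\<lambda>i. Bv B0 ks i k) 1)
     * inverse (Fpoly_eval n B0 ks y k))"
proof -
  have zmono: "seval P_ops (case_sum (\<lambda>_. 1) y) (zmono n a) = laurent_monomial n y a" for a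
    by (simp add: zmono_def seval_sprod seval_spow laurent_monomial_def)
  have negative_part: "seval P_ops \<rho> (if b < 0 then spow E_ops e (- b) else One)
      = ipow (seval P_ops \<rho> e) (max 0 (- b))" for \<rho> e and b :: int
    by (simp add: seval_spow max_def)
  have positive_part: "seval P_ops \<rho> (if b > 0 then spow E_ops e b else One)
      = ipow (seval P_ops \<rho> e) (max 0 b)" for \<rho> e and b :: int
    by (simp add: seval_spow max_def)
  have "cminus Trop_ops a = (\<lambda>i. max 0 (- a i))" "cplus Trop_ops a = (\<lambda>i. max 0 (a i))" for a
    by (auto simp: cminus_def cplus_def Trop_ops_def min_def max_def)
  then show ?thesis
    by (intro ext)
      (simp add: Fpoly_eval_cpat_principal fst_cpat_principal_snoc xmut_def seval_sprod zmono
        negative_part positive_part exchange_monomial_def laurent_monomial_def cong: if_cong)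
qed

lemma mult_max_sgn_eq: "b * max 0 (sgn b * a) = sgn a * max 0 (a * (b::int))"
  by (cases a "0::int" rule: linorder_cases; cases b "0::int" rule: linorder_cases)
    (simp_all add: mult_pos_pos mult_neg_neg mult_pos_neg mult_neg_pos mult.commute)

lemma exchange_monomial_ratio:
  "exchange_monomial n y F c b 1 * inverse (exchange_monomial n y F c b (- 1))
     = laurent_monomial n y c * laurent_monomial n F b"
proof -
  have split: "laurent_monomial n z e
      = laurent_monomial n z (\<lambda>i. max 0 (e i)) * laurent_monomial n z (\<lambda>i. - max 0 (- e i))"
    for z e
    by (subst laurent_monomial_add[symmetric]) (rule laurent_monomial_cong, simp)
  show ?thesis
    unfolding split[of y c] split[of F b]
    by (simp add: exchange_monomial_def sf_inverse_mult laurent_monomial_uminus ac_simps)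
qed

lemma exchange_monomial_ipow:
  "ipow (exchange_monomial n y F c b s) m
     = laurent_monomial n y (\<lambda>i. m * max 0 (s * c i))
       * laurent_monomial n F (\<lambda>i. m * max 0 (s * b i))"
  by (simp add: exchange_monomial_def ipow_mult_distrib laurent_monomial_ipow)

lemma exchange_binomial_ipow:
  fixes N :: "int \<Rightarrow> 'a::semifield"
  assumes Y: "Y = N 1 * inverse (N (- 1))" and F: "F' * F = N (- 1) + N 1"
  shows "ipow (1 + ipow Y (- sgn b)) (- b) = ipow F' (- b) * ipow F (- b) * ipow (N (sgn b)) b"
proof -
  have cancel: "(u + v) * inverse u = 1 + v * inverse u" for u v :: 'a
    by (simp add: distrib_right semifield_right_inverse)
  have "1 + ipow Y (- sgn b) = F' * F * inverse (N (sgn b))" if "b \<noteq> 0"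
  proof (cases "b > 0")
    case True
    have "1 + ipow Y (- sgn b) = 1 + N (- 1) * inverse (N 1)"
      using True by (simp add: Y ipow_uminus sf_inverse_mult mult.commute)
    also have "\<dots> = F' * F * inverse (N (sgn b))"
      unfolding F cancel[symmetric] using True by (simp add: add.commute)
    finally show ?thesis .
  next
    case False
    then have "1 + ipow Y (- sgn b) = 1 + N 1 * inverse (N (- 1))"
      using that by (simp add: Y)
    also have "\<dots> = F' * F * inverse (N (sgn b))"
      unfolding F cancel[symmetric] using False that by simp
    finally show ?thesis .
  qed
  then show ?thesis
    by (cases "b = 0") (simp_all add: ipow_mult_distrib ipow_inverse ipow_uminus sf_inverse_mult)
qed

lemma ymut_separated_form:
  fixes y Y F :: "nat \<Rightarrow> 'a::semifield"
  assumes k: "k < n" and Bkk: "B k k = 0"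
    and Y: "\<And>j. j < n \<Longrightarrow> Y j = laurent_monomial n y (c j) * laurent_monomial n F (\<lambda>i. B i j)"
    and j: "j < n"
  defines "N \<equiv> exchange_monomial n y F (c k) (\<lambda>i. B i k)"
  shows "ymut P_ops k B Y j = laurent_monomial n y (ymut Trop_ops k B c j)
     * laurent_monomial n (F(k := (N (- 1) + N 1) * inverse (F k))) (\<lambda>i. mutB k B i j)"
    (is "_ = _ * laurent_monomial n (F(k := ?Fk)) _")
proof (cases "j = k")
  case True
  have "ymut P_ops k B Y j
      = laurent_monomial n y (\<lambda>i. - c k i) * laurent_monomial n F (\<lambda>i. - B i k)"
    using Y[OF k] True by (simp add: ymut_P_ops laurent_monomial_uminus sf_inverse_mult)
  also have "\<dots> = laurent_monomial n y (ymut Trop_ops k B c j)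
      * (ipow ?Fk (mutB k B k j) * laurent_monomial n F ((\<lambda>i. mutB k B i j)(k := 0)))"
    using True Bkk
    by (auto simp: ymut_Trop_ops mutB_def intro!: arg_cong2[where f = "(*)"] laurent_monomial_cong)
  finally show ?thesis by (simp add: laurent_monomial_update[OF k])
next
  case False
  define b where "b = B k j"
  have Fk: "?Fk * F k = N (- 1) + N 1"
    by (simp add: mult.assoc sf_left_inverse)
  have Yk: "Y k = N 1 * inverse (N (- 1))"
    unfolding N_def exchange_monomial_ratio Y[OF k] ..
  have "ymut P_ops k B Y j = Y j * (ipow ?Fk (- b) * ipow (F k) (- b) * ipow (N (sgn b)) b)"
    using False by (simp add: ymut_P_ops b_def exchange_binomial_ipow[OF Yk Fk])
  also have "\<dots> = laurent_monomial n y (\<lambda>i. c j i + b * max 0 (sgn b * c k i))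
      * (ipow ?Fk (- b)
         * laurent_monomial n F
             (\<lambda>i. B i j + (if i = k then - b else 0) + b * max 0 (sgn b * B i k)))"
    using laurent_monomial_single[OF k, of F "- b", symmetric]
    by (simp add: Y[OF j] N_def exchange_monomial_ipow laurent_monomial_add fun_upd_def ac_simps)
  also have "\<dots> = laurent_monomial n y (ymut Trop_ops k B c j)
      * (ipow ?Fk (mutB k B k j) * laurent_monomial n F ((\<lambda>i. mutB k B i j)(k := 0)))"
    using False Bkk
    by (auto simp: b_def ymut_Trop_ops mutB_def mult_max_sgn_eq
        intro!: arg_cong2[where f = "(*)"] laurent_monomial_cong)
  finally show ?thesis by (simp add: laurent_monomial_update[OF k])
qed

theorem separation_formula:
  fixes y :: "nat \<Rightarrow> 'a::semifield"
  assumes d: "skew_symmetrizer n d B0" and ks: "\<forall>k\<in>set ks. k < n" and j: "j < n"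
  shows "fst (ypat P_ops B0 y ks) j
    = laurent_monomial n y (cvec B0 ks j)
      * laurent_monomial n (Fpoly_eval n B0 ks y) (\<lambda>i. Bv B0 ks i j)"
  using ks j
proof (induction ks arbitrary: j rule: rev_induct)
  case Nil
  have "trop_gen j = (\<lambda>_. 0)(j := 1)" by (auto simp: trop_gen_def)
  then have "laurent_monomial n y (cvec B0 [] j) = y j"
    using Nil by (simp add: cvec_Nil laurent_monomial_single del: fun_upd_apply)
  then show ?case by (simp add: Fpoly_eval_Nil laurent_monomial_def)
next
  case (snoc k ks)
  then have "k < n" "B k k = 0" if "B = Bv B0 ks" for B
    using skew_symmetrizer_diag[OF skew_symmetrizer_Bv[OF d]] that by auto
  with snoc show ?case
    by (simp add: fst_ypat_snoc ymut_separated_form Fpoly_eval_snoc cvec_snoc Bv_snoc fun_upd_def)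
qed

section \<open>Orderability of torsion-free abelian groups\<close>

primrec nsmul :: "nat \<Rightarrow> 'a::monoid_add \<Rightarrow> 'a" where
  "nsmul 0 x = 0"
| "nsmul (Suc k) x = x + nsmul k x"

lemma nsmul_add_left: "nsmul (k + l) x = nsmul k x + nsmul l (x::'a::monoid_add)"
  by (induction k) (simp_all add: add.assoc)

lemma nsmul_mult: "nsmul (k * l) x = nsmul k (nsmul l (x::'a::monoid_add))"
  by (induction k) (simp_all add: nsmul_add_left)

definition compatible_order :: "('a::ab_group_add \<times> 'a) set \<Rightarrow> bool" where
  "compatible_order r \<longleftrightarrow> irrefl r \<and> trans r \<and> (\<forall>x y z. (x, y) \<in> r \<longrightarrow> (x + z, y + z) \<in> r)"

lemma compatible_order_translate_iff:
  assumes "compatible_order r"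
  shows "(x + z, y + z) \<in> r\<^sup>= \<longleftrightarrow> (x, y) \<in> r\<^sup>="
proof -
  have "(x + z + - z, y + z + - z) \<in> r" if "(x + z, y + z) \<in> r"
    using assms that unfolding compatible_order_def by blast
  then show ?thesis using assms unfolding compatible_order_def by auto
qed

lemma compatible_order_nsmul:
  assumes r: "compatible_order r" and uv: "(u, v) \<in> r"
  shows "(nsmul (Suc m) u, nsmul (Suc m) v) \<in> r"
proof (induction m)
  case (Suc m)
  have translate: "(x + z, y + z) \<in> r" if "(x, y) \<in> r" for x y z
    using r that unfolding compatible_order_def by blast
  have "(u + nsmul (Suc m) u, v + nsmul (Suc m) u) \<in> r" by (rule translate[OF uv])
  moreover have "(nsmul (Suc m) u + v, nsmul (Suc m) v + v) \<in> r" by (rule translate[OF Suc])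
  ultimately show ?case
    using r unfolding compatible_order_def by (auto simp: add.commute elim: transE)
qed (use uv in simp)

lemma compatible_order_chain_Union:
  assumes C: "C \<in> chains {r. compatible_order r}"
  shows "compatible_order (\<Union>C)"
proof -
  have r: "compatible_order r" if "r \<in> C" for r using C chainsD2 that by blast
  have "trans (\<Union>C)"
  proof (rule transI)
    fix x y z assume "(x, y) \<in> \<Union>C" "(y, z) \<in> \<Union>C"
    then obtain r1 r2 where r12: "r1 \<in> C" "r2 \<in> C" "(x, y) \<in> r1" "(y, z) \<in> r2" by blast
    then have "(x, y) \<in> r1 \<union> r2" "(y, z) \<in> r1 \<union> r2" "r1 \<union> r2 \<in> C"
      using chainsD[OF C r12(1,2)] by (auto simp: sup_absorb1 sup_absorb2)
    then show "(x, z) \<in> \<Union>C" using r unfolding compatible_order_def by (blast elim: transE)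
  qed
  moreover have "(x, x) \<notin> \<Union>C" "(x, y) \<in> \<Union>C \<Longrightarrow> (x + z, y + z) \<in> \<Union>C" for x y z
    using r unfolding compatible_order_def irrefl_def by blast+
  ultimately show ?thesis unfolding compatible_order_def irrefl_def by blast
qed

(* Forcing a < b: declare x < y as soon as x + k b <= y + k a for some k. *)

definition extend_order :: "('a::ab_group_add \<times> 'a) set \<Rightarrow> 'a \<Rightarrow> 'a \<Rightarrow> ('a \<times> 'a) set" where
  "extend_order r a b =
     {(x, y). \<exists>k. (x + nsmul k b, y + nsmul k a) \<in> r\<^sup>= \<and> (k = 0 \<longrightarrow> (x, y) \<in> r)}"

lemma extend_order_contains: "r \<subseteq> extend_order r a b" "(a, b) \<in> extend_order r a b"
proof -
  show "r \<subseteq> extend_order r a b" unfolding extend_order_def by (auto intro: exI[of _ 0])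
  have "a + nsmul 1 b = b + nsmul 1 a" by (simp add: add.commute)
  then show "(a, b) \<in> extend_order r a b" unfolding extend_order_def by (auto intro: exI[of _ 1])
qed

lemma extend_order_trans:
  assumes r: "compatible_order r"
  shows "trans (extend_order r a b)"
proof (rule transI)
  have shift: "(x + z, y + z) \<in> r\<^sup>= \<longleftrightarrow> (x, y) \<in> r\<^sup>=" for x y z
    using compatible_order_translate_iff[OF r] .
  have tr: "trans r" using r unfolding compatible_order_def by blast
  fix x y z assume "(x, y) \<in> extend_order r a b" "(y, z) \<in> extend_order r a b"
  then obtain k l where
    k: "(x + nsmul k b, y + nsmul k a) \<in> r\<^sup>=" "k = 0 \<longrightarrow> (x, y) \<in> r" and
    l: "(y + nsmul l b, z + nsmul l a) \<in> r\<^sup>=" "l = 0 \<longrightarrow> (y, z) \<in> r"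
    unfolding extend_order_def by blast
  have "(x + nsmul k b + nsmul l b, y + nsmul k a + nsmul l b) \<in> r\<^sup>="
    using k(1) shift by blast
  then have xy: "(x + nsmul (k + l) b, y + nsmul k a + nsmul l b) \<in> r\<^sup>="
    by (simp only: nsmul_add_left add.assoc)
  have "(y + nsmul l b + nsmul k a, z + nsmul l a + nsmul k a) \<in> r\<^sup>="
    using l(1) shift by blast
  then have yz: "(y + nsmul k a + nsmul l b, z + nsmul (k + l) a) \<in> r\<^sup>="
    by (simp only: nsmul_add_left ac_simps)
  have "(x + nsmul (k + l) b, z + nsmul (k + l) a) \<in> r\<^sup>="
    using trans_on_reflcl[OF tr] xy yz by (blast elim: transE)
  moreover have "k + l = 0 \<longrightarrow> (x, z) \<in> r" using k(2) l(2) tr by (auto elim: transE)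
  ultimately show "(x, z) \<in> extend_order r a b" unfolding extend_order_def by blast
qed

lemma compatible_order_extend:
  assumes r: "compatible_order r" and ab: "a \<noteq> b"
    and torsion_free: "\<And>k. nsmul (Suc k) a = nsmul (Suc k) b \<Longrightarrow> a = b"
    and not_below: "\<And>k. (nsmul (Suc k) b, nsmul (Suc k) a) \<notin> r"
  shows "compatible_order (extend_order r a b)"
proof -
  have shift: "(x + z, y + z) \<in> r\<^sup>= \<longleftrightarrow> (x, y) \<in> r\<^sup>=" for x y z
    using compatible_order_translate_iff[OF r] .
  have irr: "(x, x) \<notin> r" for x
    using r unfolding compatible_order_def irrefl_def by auto
  have "(x, x) \<notin> extend_order r a b" for x
  proof
    assume "(x, x) \<in> extend_order r a b"
    then obtain k where k: "(nsmul k b + x, nsmul k a + x) \<in> r\<^sup>=" "k = 0 \<longrightarrow> (x, x) \<in> r"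
      unfolding extend_order_def by (auto simp: add.commute)
    then obtain m where "k = Suc m" using irr by (cases k) auto
    moreover have "(nsmul k b, nsmul k a) \<in> r\<^sup>=" using k(1) shift by blast
    ultimately show False using not_below torsion_free ab by (metis Un_iff pair_in_Id_conv)
  qed
  moreover have "trans (extend_order r a b)" using r by (rule extend_order_trans)
  moreover have "(x + z, y + z) \<in> extend_order r a b" if xy: "(x, y) \<in> extend_order r a b" for x y z
  proof -
    obtain k where k: "(x + nsmul k b, y + nsmul k a) \<in> r\<^sup>=" "k = 0 \<longrightarrow> (x, y) \<in> r"
      using xy unfolding extend_order_def by blast
    have "(x + nsmul k b + z, y + nsmul k a + z) \<in> r\<^sup>=" using k(1) shift by blast
    then have "(x + z + nsmul k b, y + z + nsmul k a) \<in> r\<^sup>=" by (simp only: ac_simps)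
    moreover have "k = 0 \<longrightarrow> (x + z, y + z) \<in> r" using k(2) r unfolding compatible_order_def by blast
    ultimately show ?thesis unfolding extend_order_def by blast
  qed
  ultimately show ?thesis unfolding compatible_order_def irrefl_def by blast
qed

theorem torsion_free_total_order_exists:
  assumes torsion_free: "\<And>(a::'a::ab_group_add) b k. nsmul (Suc k) a = nsmul (Suc k) b \<Longrightarrow> a = b"
  shows "\<exists>r::('a \<times> 'a) set. compatible_order r \<and> total r"
proof -
  have "\<forall>C\<in>chains {r. compatible_order r}. \<Union>C \<in> {r::('a \<times> 'a) set. compatible_order r}"
    using compatible_order_chain_Union by blast
  from Zorn_Lemma[OF this] obtain r :: "('a \<times> 'a) set" where r: "compatible_order r"
    and maximal: "\<And>r'. compatible_order r' \<Longrightarrow> r \<subseteq> r' \<Longrightarrow> r' = r"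
    by blast
  have irr: "(x, x) \<notin> r" and tr: "trans r" for x
    using r unfolding compatible_order_def irrefl_def by auto
  have below: "\<exists>k. (nsmul (Suc k) b, nsmul (Suc k) a) \<in> r" if "a \<noteq> b" "(a, b) \<notin> r" for a b
  proof (rule ccontr)
    assume none: "\<not> ?thesis"
    have "compatible_order (extend_order r a b)"
    proof (rule compatible_order_extend[OF r that(1)])
      show "nsmul (Suc k) a = nsmul (Suc k) b \<Longrightarrow> a = b" for k by (rule torsion_free)
      show "(nsmul (Suc k) b, nsmul (Suc k) a) \<notin> r" for k using none by blast
    qed
    then have "extend_order r a b = r" using maximal[OF _ extend_order_contains(1)] by blast
    then show False using extend_order_contains(2) that(2) by blast
  qed
  have "(a, b) \<in> r \<or> (b, a) \<in> r" if ab: "a \<noteq> b" for a b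
  proof (rule ccontr)
    assume "\<not> ?thesis"
    then obtain k l
    where "(nsmul (Suc k) b, nsmul (Suc k) a) \<in> r" "(nsmul (Suc l) a, nsmul (Suc l) b) \<in> r"
      using below[OF ab] below[OF ab[symmetric]] by blast
    then have "(nsmul (Suc l) (nsmul (Suc k) b), nsmul (Suc l) (nsmul (Suc k) a)) \<in> r"
      "(nsmul (Suc k) (nsmul (Suc l) a), nsmul (Suc k) (nsmul (Suc l) b)) \<in> r"
      using compatible_order_nsmul[OF r] by blast+
    moreover have comm: "nsmul (Suc l) (nsmul (Suc k) x) = nsmul (Suc k) (nsmul (Suc l) x)" for x
      by (metis nsmul_mult mult.commute)
    ultimately have "(nsmul (Suc k) (nsmul (Suc l) b), nsmul (Suc k) (nsmul (Suc l) a)) \<in> r"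
      "(nsmul (Suc k) (nsmul (Suc l) a), nsmul (Suc k) (nsmul (Suc l) b)) \<in> r"
      by (simp_all only: comm)
    then show False using irr tr by (blast elim: transE)
  qed
  with r show ?thesis unfolding total_on_def by blast
qed

primrec powsum :: "'a::semifield \<Rightarrow> nat \<Rightarrow> 'a" where
  "powsum x 0 = x"
| "powsum x (Suc m) = x * (1 + powsum x m)"

lemma powsum_Suc_eq: "powsum x (Suc m) = powsum x m + x ^ Suc (Suc m)"
proof (induction m)
  case (Suc m)
  have "powsum x (Suc (Suc m)) = x * (1 + powsum x m) + x * x ^ Suc (Suc m)"
    by (simp only: powsum.simps(2)[of x "Suc m"] Suc.IH distrib_left add.assoc)
  then show ?case by simp
qed (simp add: distrib_left power2_eq_square)

lemma sf_power_eq_one: assumes "(x::'a::semifield) ^ Suc k = 1" shows "x = 1"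
proof (cases k)
  case (Suc m)
  define S where "S = 1 + powsum x m"
  have "S * x = powsum x (Suc m)" by (simp add: S_def mult.commute)
  also have "\<dots> = S * 1" unfolding powsum_Suc_eq using assms Suc by (simp add: S_def add.commute)
  finally show ?thesis by (rule sf_mult_left_cancel)
qed (use assms in simp)

lemma sf_power_inject: assumes "(a::'a::semifield) ^ Suc k = b ^ Suc k" shows "a = b"
proof -
  have "(a * inverse b) ^ Suc k = 1"
    by (simp only: power_mult_distrib sf_inverse_power[symmetric] assms semifield_right_inverse)
  then have "a * inverse b = 1" by (rule sf_power_eq_one)
  then have "a * inverse b * b = b" by simp
  then show ?thesis by (simp only: mult.assoc sf_left_inverse mult_1_right)
qed

instantiation mult :: (semifield) ab_group_add
begin

fun uminus_mult :: "'a mult \<Rightarrow> 'a mult" where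
  "uminus_mult (Mult a) = Mult (inverse a)"

definition minus_mult :: "'a mult \<Rightarrow> 'a mult \<Rightarrow> 'a mult" where
  "minus_mult x y = x + - y"

instance
proof
  fix a b :: "'a mult"
  show "- a + a = 0" by (cases a) (simp add: zero_mult_def sf_left_inverse)
  show "a - b = a + - b" by (simp add: minus_mult_def)
qed

end

lemma nsmul_Mult: "nsmul k (Mult a) = Mult ((a::'a::semifield) ^ k)"
  by (induction k) (simp_all add: zero_mult_def)

lemma mult_torsion_free: "nsmul (Suc k) a = nsmul (Suc k) b \<Longrightarrow> a = (b::'a::semifield mult)"
  by (cases a; cases b) (auto simp: nsmul_Mult intro: sf_power_inject)

(* Any compatible linear order will do; its only purpose is the library instance making the
   monoid ring 'p ZPy over the lexicographically ordered monoid 'p mult \<times> (nat \<Rightarrow>\<^sub>0 nat) an idom. *)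

definition mult_order :: "('a::semifield mult \<times> 'a mult) set" where
  "mult_order = (SOME r. compatible_order r \<and> total r)"

lemma mult_order:
  "compatible_order (mult_order :: ('a::semifield mult \<times> 'a mult) set)
    \<and> total (mult_order :: ('a mult \<times> 'a mult) set)"
proof -
  obtain r :: "('a mult \<times> 'a mult) set" where "compatible_order r \<and> total r"
    using torsion_free_total_order_exists mult_torsion_free by blast
  then show ?thesis unfolding mult_order_def by (rule someI)
qed

instantiation mult :: (semifield) linordered_ab_group_add
begin

definition less_mult :: "'a mult \<Rightarrow> 'a mult \<Rightarrow> bool" where
  "less_mult a b \<longleftrightarrow> (a, b) \<in> mult_order"

definition less_eq_mult :: "'a mult \<Rightarrow> 'a mult \<Rightarrow> bool" where
  "less_eq_mult a b \<longleftrightarrow> a = b \<or> (a, b) \<in> mult_order"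

instance
proof
  have irr: "(a, a) \<notin> mult_order" and tr: "trans mult_order" and tot: "total mult_order"
    and translate: "(a, b) \<in> mult_order \<Longrightarrow> (a + c, b + c) \<in> mult_order" for a b c :: "'a mult"
    using mult_order unfolding compatible_order_def irrefl_def by blast+
  fix a b c :: "'a mult"
  show "a < b \<longleftrightarrow> a \<le> b \<and> \<not> b \<le> a"
    using irr tr unfolding less_mult_def less_eq_mult_def by (blast elim: transE)
  show "a \<le> a" by (simp add: less_eq_mult_def)
  show "a \<le> b \<Longrightarrow> b \<le> c \<Longrightarrow> a \<le> c"
    using tr unfolding less_mult_def less_eq_mult_def by (blast elim: transE)
  show "a \<le> b \<Longrightarrow> b \<le> a \<Longrightarrow> a = b"
    using irr tr unfolding less_mult_def less_eq_mult_def by (blast elim: transE)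
  show "a \<le> b \<or> b \<le> a"
    using tot unfolding less_mult_def less_eq_mult_def total_on_def by blast
  show "a \<le> b \<Longrightarrow> c + a \<le> c + b"
    using translate unfolding less_mult_def less_eq_mult_def by (auto simp: add.commute)
qed

end

instance prod :: (ordered_cancel_comm_monoid_add, ordered_cancel_comm_monoid_add)
    ordered_cancel_comm_monoid_add
  by standard (auto simp: less_eq_prod_def add_strict_left_mono add_left_mono)

section \<open>The semifield of positive fractions\<close>

definition positive :: "'p::semifield ZPy \<Rightarrow> bool" where
  "positive f \<longleftrightarrow> f \<noteq> 0 \<and> (\<forall>k. 0 \<le> poly_mapping.lookup f k)"

definition positive_fraction :: "'p::semifield QPy \<Rightarrow> bool" where
  "positive_fraction u \<longleftrightarrow> positive (fst u) \<and> positive (snd u)"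

definition frac_rel :: "'p::semifield QPy \<Rightarrow> 'p QPy \<Rightarrow> bool" where
  "frac_rel u w \<longleftrightarrow> positive_fraction u \<and> positive_fraction w \<and> qeq u w"

lemma positive_mult:
  assumes f: "positive f" and g: "positive g"
  shows "positive (f * g)"
proof -
  have Sum_any_nonneg: "Sum_any h \<ge> 0" if "\<And>x. h x \<ge> (0::int)" for h
    using that by (simp add: Sum_any.expand_set sum_nonneg)
  have "0 \<le> poly_mapping.lookup (f * g) k" for k
    unfolding times_poly_mapping.rep_eq prod_fun_def
    by (intro Sum_any_nonneg mult_nonneg_nonneg) (use f g in \<open>auto simp: positive_def when_def\<close>)
  with f g show ?thesis by (simp add: positive_def)
qed

lemma positive_add: "positive f \<Longrightarrow> positive g \<Longrightarrow> positive (f + g)"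
  unfolding positive_def
  by (metis add_nonneg_nonneg add_nonneg_eq_0_iff lookup_add lookup_zero poly_mapping_eqI)

lemma positive_single: "positive (Poly_Mapping.single k 1)"
  by (simp add: positive_def lookup_single when_def)

lemma positive_one: "positive 1"
  by (simp add: positive_def lookup_one when_def)

lemma S_ops_simps:
  "sadd S_ops u w = (fst u * snd w + fst w * snd u, snd u * snd w)"
  "smul S_ops u w = (fst u * fst w, snd u * snd w)"
  "sinv S_ops u = (snd u, fst u)"
  "sone S_ops = (1, 1)"
  by (simp_all add: S_ops_def split_beta)

lemma positive_fraction_ops:
  "positive_fraction u \<Longrightarrow> positive_fraction w \<Longrightarrow> positive_fraction (sadd S_ops u w)"
  "positive_fraction u \<Longrightarrow> positive_fraction w \<Longrightarrow> positive_fraction (smul S_ops u w)"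
  "positive_fraction u \<Longrightarrow> positive_fraction (sinv S_ops u)"
  "positive_fraction (sone S_ops)"
  unfolding positive_fraction_def S_ops_simps
  by (auto intro: positive_mult positive_add positive_one)

lemma frac_rel_part_equivp: "part_equivp (frac_rel :: 'p::semifield QPy \<Rightarrow> 'p QPy \<Rightarrow> bool)"
proof (rule part_equivpI)
  show "\<exists>x::'p QPy. frac_rel x x"
    using positive_fraction_ops(4) unfolding frac_rel_def qeq_def by blast
  show "symp (frac_rel :: 'p QPy \<Rightarrow> _)" by (rule sympI) (auto simp: frac_rel_def qeq_def)
  show "transp (frac_rel :: 'p QPy \<Rightarrow> _)"
  proof (rule transpI)
    fix u v w :: "'p QPy" assume uv: "frac_rel u v" and vw: "frac_rel v w"
    have "snd v * (fst u * snd w) = (fst u * snd v) * snd w" by (simp add: ac_simps)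
    also have "\<dots> = (fst v * snd w) * snd u" using uv by (simp add: frac_rel_def qeq_def ac_simps)
    also have "\<dots> = snd v * (fst w * snd u)" using vw by (simp add: frac_rel_def qeq_def ac_simps)
    \<comment> \<open>cancel \<open>snd v \<noteq> 0\<close> in the domain \<open>'p ZPy\<close>\<close>
    finally have "fst u * snd w = fst w * snd u"
      using uv by (simp add: frac_rel_def positive_fraction_def positive_def)
    then show "frac_rel u w" using uv vw by (simp add: frac_rel_def qeq_def)
  qed
qed

quotient_type (overloaded) 'p posfrac = "'p::semifield QPy" / partial: frac_rel
  by (rule frac_rel_part_equivp)

lemma frac_rel_sadd:
  assumes u: "frac_rel u u'" and w: "frac_rel w w'"
  shows "frac_rel (sadd S_ops u w) (sadd S_ops u' w')"
proof -
  have eqs: "fst u * snd u' = fst u' * snd u" "fst w * snd w' = fst w' * snd w"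
    using u w by (simp_all add: frac_rel_def qeq_def)
  have "(fst u * snd w + fst w * snd u) * (snd u' * snd w')
      = (fst u * snd u') * (snd w * snd w') + (fst w * snd w') * (snd u * snd u')"
    by (simp add: algebra_simps)
  also have "\<dots> = (fst u' * snd u) * (snd w * snd w') + (fst w' * snd w) * (snd u * snd u')"
    by (simp only: eqs)
  also have "\<dots> = (fst u' * snd w' + fst w' * snd u') * (snd u * snd w)"
    by (simp add: algebra_simps)
  finally have "qeq (sadd S_ops u w) (sadd S_ops u' w')" by (simp add: qeq_def S_ops_simps)
  with u w show ?thesis by (simp add: frac_rel_def positive_fraction_ops)
qed

lemma frac_rel_smul:
  assumes u: "frac_rel u u'" and w: "frac_rel w w'"
  shows "frac_rel (smul S_ops u w) (smul S_ops u' w')"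
proof -
  have eqs: "fst u * snd u' = fst u' * snd u" "fst w * snd w' = fst w' * snd w"
    using u w by (simp_all add: frac_rel_def qeq_def)
  have "(fst u * fst w) * (snd u' * snd w') = (fst u * snd u') * (fst w * snd w')"
    by (simp add: ac_simps)
  also have "\<dots> = (fst u' * fst w') * (snd u * snd w)"
    by (simp add: eqs ac_simps)
  finally have "qeq (smul S_ops u w) (smul S_ops u' w')" by (simp add: qeq_def S_ops_simps)
  with u w show ?thesis by (simp add: frac_rel_def positive_fraction_ops)
qed

lemma frac_rel_sinv: "frac_rel u u' \<Longrightarrow> frac_rel (sinv S_ops u) (sinv S_ops u')"
  by (auto simp: frac_rel_def qeq_def positive_fraction_def S_ops_simps mult.commute)

lemma frac_rel_semifield_laws:
  assumes "positive_fraction a" "positive_fraction b" "positive_fraction c"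
  shows "frac_rel (sadd S_ops (sadd S_ops a b) c) (sadd S_ops a (sadd S_ops b c))"
    and "frac_rel (sadd S_ops a b) (sadd S_ops b a)"
    and "frac_rel (smul S_ops (smul S_ops a b) c) (smul S_ops a (smul S_ops b c))"
    and "frac_rel (smul S_ops a b) (smul S_ops b a)"
    and "frac_rel (smul S_ops (sadd S_ops a b) c) (sadd S_ops (smul S_ops a c) (smul S_ops b c))"
    and "frac_rel (smul S_ops (sone S_ops) a) a"
    and "frac_rel (smul S_ops a (sinv S_ops a)) (sone S_ops)"
  unfolding frac_rel_def
  by (intro conjI positive_fraction_ops assms;
      simp add: qeq_def S_ops_simps algebra_simps)+

instantiation posfrac :: (semifield) semifield
begin

lift_definition one_posfrac :: "'a posfrac" is "sone S_ops"
  by (simp add: frac_rel_def qeq_def positive_fraction_ops)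

lift_definition plus_posfrac :: "'a posfrac \<Rightarrow> 'a posfrac \<Rightarrow> 'a posfrac" is "sadd S_ops"
  by (rule frac_rel_sadd)

lift_definition times_posfrac :: "'a posfrac \<Rightarrow> 'a posfrac \<Rightarrow> 'a posfrac" is "smul S_ops"
  by (rule frac_rel_smul)

lift_definition inverse_posfrac :: "'a posfrac \<Rightarrow> 'a posfrac" is "sinv S_ops"
  by (rule frac_rel_sinv)

definition divide_posfrac :: "'a posfrac \<Rightarrow> 'a posfrac \<Rightarrow> 'a posfrac" where
  "divide_posfrac a b = a * inverse b"

instance
proof
  fix a b c :: "'a posfrac"
  show "a + b + c = a + (b + c)" by transfer (rule frac_rel_semifield_laws; simp add: frac_rel_def)
  show "a + b = b + a"
    by transfer (rule frac_rel_semifield_laws[where c = "sone S_ops"];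
        simp add: frac_rel_def positive_fraction_ops)
  show "a * b * c = a * (b * c)" by transfer (rule frac_rel_semifield_laws; simp add: frac_rel_def)
  show "a * b = b * a"
    by transfer (rule frac_rel_semifield_laws[where c = "sone S_ops"];
        simp add: frac_rel_def positive_fraction_ops)
  show "(a + b) * c = a * c + b * c"
    by transfer (rule frac_rel_semifield_laws; simp add: frac_rel_def)
  show "1 * a = a"
    by transfer (rule frac_rel_semifield_laws[where b = "sone S_ops" and c = "sone S_ops"];
        simp add: frac_rel_def positive_fraction_ops)
  show "a * inverse a = 1"
    by transfer (rule frac_rel_semifield_laws[where b = "sone S_ops" and c = "sone S_ops"];
        simp add: frac_rel_def positive_fraction_ops)
  show "divide a b = a * inverse b" by (simp add: divide_posfrac_def)
qed

end

lemma frac_rel_refl_iff: "frac_rel u u \<longleftrightarrow> positive_fraction u"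
  by (simp add: frac_rel_def qeq_def)

lemma abs_posfrac_seval:
  assumes "\<And>v. positive_fraction (\<rho> v)"
  shows "positive_fraction (seval S_ops \<rho> e)
    \<and> abs_posfrac (seval S_ops \<rho> e) = seval P_ops (\<lambda>v. abs_posfrac (\<rho> v)) e"
  using assms
  by (induction e)
    (simp_all add: positive_fraction_ops frac_rel_refl_iff one_posfrac.abs_eq[symmetric]
      plus_posfrac.abs_eq[symmetric] times_posfrac.abs_eq[symmetric]
      inverse_posfrac.abs_eq[symmetric])

lemma positive_fraction_spow: "positive_fraction u \<Longrightarrow> positive_fraction (spow S_ops u m)"
  and abs_posfrac_spow:
    "positive_fraction u \<Longrightarrow> abs_posfrac (spow S_ops u m) = ipow (abs_posfrac u) m"
  using abs_posfrac_seval[of "\<lambda>_::unit. u" "spow E_ops (V ()) m"] by (simp_all add: seval_spow)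

lemma positive_fraction_sprod: "(\<And>i. positive_fraction (f i)) \<Longrightarrow> positive_fraction (sprod S_ops n f)"
  and abs_posfrac_sprod:
    "(\<And>i. positive_fraction (f i)) \<Longrightarrow> abs_posfrac (sprod S_ops n f) = (\<Prod>i<n. abs_posfrac (f i))"
  using abs_posfrac_seval[of f "sprod E_ops n V"] by (simp_all add: seval_sprod)

lemma abs_posfrac_ops:
  "positive_fraction u \<Longrightarrow> positive_fraction w
    \<Longrightarrow> abs_posfrac (sadd S_ops u w) = abs_posfrac u + abs_posfrac w"
  "positive_fraction u \<Longrightarrow> positive_fraction w
    \<Longrightarrow> abs_posfrac (smul S_ops u w) = abs_posfrac u * abs_posfrac w"
  "positive_fraction u \<Longrightarrow> abs_posfrac (sinv S_ops u) = inverse (abs_posfrac u)"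
  by (simp_all add: frac_rel_refl_iff plus_posfrac.abs_eq[symmetric] times_posfrac.abs_eq[symmetric]
      inverse_posfrac.abs_eq[symmetric])

lemma positive_fraction_embP: "positive_fraction (embP c)"
  and positive_fraction_yvar: "positive_fraction (yvar i)"
  by (simp_all add: positive_fraction_def embP_def yvar_def positive_single positive_one)

definition coeff_posfrac :: "'p::semifield \<Rightarrow> 'p posfrac" where
  "coeff_posfrac c = abs_posfrac (embP c)"

lemma coeff_posfrac_mult: "coeff_posfrac (a * b) = coeff_posfrac a * coeff_posfrac b"
proof -
  have "smul S_ops (embP a) (embP b) = embP (a * b)"
    by (simp add: S_ops_simps embP_def mult_single)
  moreover have "abs_posfrac (smul S_ops (embP a) (embP b)) = coeff_posfrac a * coeff_posfrac b"
    unfolding coeff_posfrac_def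
    by (rule abs_posfrac_ops(2)[OF positive_fraction_embP positive_fraction_embP])
  ultimately show ?thesis by (simp add: coeff_posfrac_def)
qed

lemma coeff_posfrac_one: "coeff_posfrac (1::'p::semifield) = 1"
proof -
  have "embP (1::'p) = sone S_ops"
    by (simp add: S_ops_simps embP_def zero_mult_def[symmetric] zero_prod_def[symmetric])
  then show ?thesis by (simp add: coeff_posfrac_def one_posfrac.abs_eq[symmetric])
qed

lemma coeff_posfrac_inverse: "coeff_posfrac (inverse a) = inverse (coeff_posfrac a)"
  by (rule sf_inverse_unique[symmetric])
    (simp add: coeff_posfrac_mult[symmetric] semifield_right_inverse coeff_posfrac_one)

lemma coeff_posfrac_ipow: "coeff_posfrac (ipow a m) = ipow (coeff_posfrac a) m"
proof -
  have "coeff_posfrac (a ^ k) = coeff_posfrac a ^ k" for k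
    by (induction k) (simp_all add: coeff_posfrac_one coeff_posfrac_mult)
  then show ?thesis by (simp add: ipow_def coeff_posfrac_inverse)
qed

lemma coeff_posfrac_prod: "coeff_posfrac (\<Prod>i\<in>A. f i) = (\<Prod>i\<in>A. coeff_posfrac (f i))"
  by (induction A rule: infinite_finite_induct) (simp_all add: coeff_posfrac_one coeff_posfrac_mult)

lemma cbr_P_ops:
  "cbr P_ops c b = (if b < 0 then inverse (c + 1) else if b = 0 then 1 else c * inverse (c + 1))"
  by (simp add: cbr_def cminus_def cplus_def)

lemma coeff_posfrac_exchange_binomial:
  fixes u :: "'p::semifield posfrac" and c :: 'p and b :: int
  assumes "b \<noteq> 0"
  shows "coeff_posfrac (cbr P_ops c b)
      + coeff_posfrac (cbr P_ops c (- b)) * ipow (u * inverse (coeff_posfrac c)) (- sgn b)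
    = (1 + ipow u (- sgn b)) * inverse (coeff_posfrac (1 + ipow c (- sgn b)))"
    (is "?lhs = _")
proof -
  define R where "R = coeff_posfrac (inverse (c + 1))"
  define C where "C = coeff_posfrac c"
  show ?thesis
  proof (cases "b > 0")
    case True
    have "(1 + inverse c) * (c * inverse (c + 1)) = (c + 1) * inverse (c + 1)"
      by (simp only: distrib_right mult.assoc[symmetric] sf_left_inverse mult_1 add.commute)
    then have "inverse (1 + inverse c) = c * inverse (c + 1)"
      by (simp add: sf_inverse_unique semifield_right_inverse)
    then have "inverse (coeff_posfrac (1 + ipow c (- sgn b))) = C * R"
      using True
      by (simp add: C_def R_def ipow_uminus coeff_posfrac_inverse[symmetric] coeff_posfrac_mult)
    moreover have "?lhs = (1 + inverse u) * (C * R)"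
      using True
      by (simp add: cbr_P_ops coeff_posfrac_mult coeff_posfrac_inverse ipow_uminus sf_inverse_mult
          R_def C_def algebra_simps)
    ultimately show ?thesis using True by (simp add: ipow_uminus)
  next
    case False
    with assms have "b < 0" by simp
    then have "?lhs = R + R * u * (C * inverse C)"
      by (simp add: cbr_P_ops coeff_posfrac_mult coeff_posfrac_inverse R_def C_def ac_simps)
    also have "\<dots> = (1 + u) * R" by (simp add: semifield_right_inverse algebra_simps)
    finally show ?thesis using \<open>b < 0\<close> by (simp add: C_def R_def coeff_posfrac_inverse add.commute)
  qed
qed

lemma ycmut_ratio:
  fixes Y :: "nat \<Rightarrow> 'p::semifield QPy"
  assumes pos: "\<And>j. positive_fraction (Y j)"
    and Y: "\<And>j. abs_posfrac (Y j) = U j * inverse (coeff_posfrac (q j))"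
  shows "positive_fraction (ycmut k B q Y j)"
    and "abs_posfrac (ycmut k B q Y j)
      = ymut P_ops k B U j * inverse (coeff_posfrac (ymut P_ops k B q j))"
proof -
  note positivity = pos positive_fraction_ops positive_fraction_spow positive_fraction_embP
  show "positive_fraction (ycmut k B q Y j)" by (simp add: ycmut_def positivity)
  show "abs_posfrac (ycmut k B q Y j)
      = ymut P_ops k B U j * inverse (coeff_posfrac (ymut P_ops k B q j))"
  proof (cases "j = k")
    case True
    then show ?thesis
      by (simp add: ycmut_def ymut_P_ops abs_posfrac_ops positivity Y sf_inverse_mult
          coeff_posfrac_inverse)
  next
    case False
    define b where "b = B k j"
    have "abs_posfrac (ycmut k B q Y j) = abs_posfrac (Y j) * ipow
        (coeff_posfrac (cbr P_ops (q k) b)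
          + coeff_posfrac (cbr P_ops (q k) (- b)) * ipow (abs_posfrac (Y k)) (- sgn b)) (- b)"
      using False
      by (simp add: ycmut_def b_def abs_posfrac_ops abs_posfrac_spow positivity coeff_posfrac_def)
    also have "\<dots> = (U j * ipow (1 + ipow (U k) (- sgn b)) (- b))
        * inverse (coeff_posfrac (q j * ipow (1 + ipow (q k) (- sgn b)) (- b)))"
    proof (cases "b = 0")
      case False
      show ?thesis
        unfolding Y[of k] coeff_posfrac_exchange_binomial[OF False]
        by (simp add: Y ipow_mult_distrib ipow_inverse coeff_posfrac_mult coeff_posfrac_ipow
            sf_inverse_mult ac_simps)
    qed (simp add: Y)
    finally show ?thesis using False by (simp add: ymut_P_ops b_def)
  qed
qed

lemma fst_ycpat_snoc:
  "fst (ycpat B0 p (ks @ [k]))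
    = ycmut k (Bv B0 ks) (fst (ypat P_ops B0 p ks)) (fst (ycpat B0 p ks))"
proof -
  have "snd (ycpat B0 p ks) = (fst (ypat P_ops B0 p ks), Bv B0 ks)"
    by (induction ks rule: rev_induct) (simp_all add: ycpat_def split_beta fst_ypat_snoc Bv_snoc)
  then show ?thesis by (simp add: ycpat_def split_beta)
qed

theorem Ytilde_ratio:
  "positive_fraction (Ytilde B0 p ks j) \<and>
   abs_posfrac (Ytilde B0 p ks j) =
     fst (ypat P_ops B0 (\<lambda>l. coeff_posfrac (p l) * abs_posfrac (yvar l)) ks) j
     * inverse (coeff_posfrac (fst (ypat P_ops B0 p ks) j))"
  unfolding Ytilde_def
proof (induction ks arbitrary: j rule: rev_induct)
  case Nil
  have "coeff_posfrac (p j) * abs_posfrac (yvar j) * inverse (coeff_posfrac (p j))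
      = abs_posfrac (yvar j)"
    by (simp add: ac_simps semifield_right_inverse)
  then show ?case by (simp add: ycpat_def positive_fraction_yvar)
next
  case (snoc k ks)
  then show ?case by (simp add: fst_ycpat_snoc fst_ypat_snoc ycmut_ratio)
qed

lemma qeq_if_abs_posfrac_eq:
  assumes "positive_fraction u" "positive_fraction w" "abs_posfrac u = abs_posfrac w"
  shows "qeq u w"
  using Quotient3_rel[OF Quotient3_posfrac, of u w] assms by (simp add: frac_rel_def qeq_def)

lemma laurent_monomial_mult_base:
  "laurent_monomial n (\<lambda>i. y i * z i) e = laurent_monomial n y e * laurent_monomial n z e"
  by (simp add: laurent_monomial_def ipow_mult_distrib prod.distrib)

lemma coeff_posfrac_laurent_monomial:
  "coeff_posfrac (laurent_monomial n y e) = laurent_monomial n (\<lambda>i. coeff_posfrac (y i)) e"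
  by (simp add: laurent_monomial_def coeff_posfrac_prod coeff_posfrac_ipow)

lemma positive_fraction_seval_Fpoly:
  assumes "\<And>l. positive_fraction (\<rho> l)"
  shows "positive_fraction (seval S_ops \<rho> (spow E_ops (Fpoly n B0 ks i) m))"
    and "abs_posfrac (seval S_ops \<rho> (spow E_ops (Fpoly n B0 ks i) m))
      = ipow (Fpoly_eval n B0 ks (\<lambda>l. abs_posfrac (\<rho> l)) i) m"
  using abs_posfrac_seval[OF assms, where e = "spow E_ops (Fpoly n B0 ks i) m"]
  by (simp_all add: seval_spow Fpoly_eval_def)

lemma separated_product_ratio:
  fixes p :: "nat \<Rightarrow> 'p::semifield" and b c :: "nat \<Rightarrow> int"
    and n :: nat and B :: "nat \<Rightarrow> nat \<Rightarrow> int" and ks :: "nat list"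
  defines "y \<equiv> \<lambda>l. coeff_posfrac (p l) * abs_posfrac (yvar l :: 'p QPy)"
    and "\<rho> \<equiv> \<lambda>l. smul S_ops (embP (p l)) (yvar l)"
  defines "R \<equiv> smul S_ops
      (embP (sprod P_ops n (\<lambda>i. seval P_ops p (spow E_ops (Fpoly n B ks i) (- b i)))))
      (smul S_ops
        (sprod S_ops n (\<lambda>i. seval S_ops \<rho> (spow E_ops (Fpoly n B ks i) (b i))))
        (sprod S_ops n (\<lambda>i. spow S_ops (yvar i) (c i))))"
  shows "positive_fraction R"
    and "abs_posfrac R = laurent_monomial n y c * laurent_monomial n (Fpoly_eval n B ks y) b
      * inverse (coeff_posfrac (laurent_monomial n p c
          * laurent_monomial n (Fpoly_eval n B ks p) b))"
proof -
  have \<rho>: "positive_fraction (\<rho> l)" for l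
    by (simp add: \<rho>_def positive_fraction_ops positive_fraction_embP positive_fraction_yvar)
  have y: "y = (\<lambda>l. abs_posfrac (\<rho> l))"
    by (simp add: y_def \<rho>_def abs_posfrac_ops positive_fraction_embP positive_fraction_yvar
        coeff_posfrac_def)
  note positivity = positive_fraction_ops positive_fraction_embP positive_fraction_yvar
    positive_fraction_spow positive_fraction_sprod positive_fraction_seval_Fpoly[OF \<rho>]
  show "positive_fraction R" by (simp add: R_def positivity)
  define Lp where "Lp = coeff_posfrac (laurent_monomial n p c)"
  define Ly where "Ly = laurent_monomial n (\<lambda>i. abs_posfrac (yvar i :: 'p QPy)) c"
  have Fp: "coeff_posfrac (\<Prod>i<n. seval P_ops p (spow E_ops (Fpoly n B ks i) (- b i)))
      = inverse (coeff_posfrac (laurent_monomial n (Fpoly_eval n B ks p) b))"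
    by (simp add: seval_spow Fpoly_eval_def laurent_monomial_def ipow_uminus
        sf_inverse_prod[symmetric] coeff_posfrac_inverse)
  have Fy: "abs_posfrac (sprod S_ops n (\<lambda>i. seval S_ops \<rho> (spow E_ops (Fpoly n B ks i) (b i))))
      = laurent_monomial n (Fpoly_eval n B ks y) b"
    by (simp add: abs_posfrac_sprod positivity positive_fraction_seval_Fpoly(2)[OF \<rho>]
        laurent_monomial_def y)
  have Z: "abs_posfrac (sprod S_ops n (\<lambda>i. spow S_ops (yvar i) (c i))) = Ly"
    by (simp add: abs_posfrac_sprod abs_posfrac_spow positivity Ly_def laurent_monomial_def)
  have "abs_posfrac R = (Lp * inverse Lp) * Ly * laurent_monomial n (Fpoly_eval n B ks y) b
      * inverse (coeff_posfrac (laurent_monomial n (Fpoly_eval n B ks p) b))"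
    by (simp add: R_def abs_posfrac_ops positivity coeff_posfrac_def[symmetric] Fp Fy Z
        semifield_right_inverse ac_simps)
  moreover have "laurent_monomial n y c = Lp * Ly"
    unfolding y_def laurent_monomial_mult_base Lp_def Ly_def coeff_posfrac_laurent_monomial ..
  moreover have "coeff_posfrac (laurent_monomial n p c * laurent_monomial n (Fpoly_eval n B ks p) b)
      = Lp * coeff_posfrac (laurent_monomial n (Fpoly_eval n B ks p) b)"
    by (simp add: Lp_def coeff_posfrac_mult)
  ultimately show "abs_posfrac R = laurent_monomial n y c * laurent_monomial n (Fpoly_eval n B ks y) b
      * inverse (coeff_posfrac (laurent_monomial n p c
          * laurent_monomial n (Fpoly_eval n B ks p) b))"
    by (simp add: sf_inverse_mult ac_simps)
qed

theorem mainTheorem2: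
  fixes n :: nat and B0 :: "nat \<Rightarrow> nat \<Rightarrow> int" and p :: "nat \<Rightarrow> 'p::semifield"
    and ks :: "nat list" and j :: nat
  assumes "exchange_matrix n B0"
    and "tree_vertex n ks"
    and "j < n"
  shows "qeq (Ytilde B0 p ks j)
     (smul S_ops
        (embP (sprod P_ops n (\<lambda>i. seval P_ops p
                 (spow E_ops (Fpoly n B0 ks i) (- Bv B0 ks i j)))))
        (smul S_ops
           (sprod S_ops n (\<lambda>i. seval S_ops (\<lambda>l. smul S_ops (embP (p l)) (yvar l))
                 (spow E_ops (Fpoly n B0 ks i) (Bv B0 ks i j))))
           (sprod S_ops n (\<lambda>i. spow S_ops (yvar i) (cvec B0 ks j i)))))"
proof -
  obtain d where d: "skew_symmetrizer n d B0"
    using assms(1) unfolding exchange_matrix_def skew_symmetrizer_def by blast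
  have ks: "\<forall>k\<in>set ks. k < n" using assms(2) unfolding tree_vertex_def by blast
  note separation = separation_formula[OF d ks assms(3)]
  note ratio = separated_product_ratio[where p = p and n = n and B = B0 and ks = ks
      and b = "\<lambda>i. Bv B0 ks i j" and c = "cvec B0 ks j"]
  show ?thesis
    using Ytilde_ratio[of B0 p ks j]
    by (intro qeq_if_abs_posfrac_eq[OF _ ratio(1)])
      (simp_all add: ratio(2) separation del: sprod_P_ops)
qed

end
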